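(* Let $|\Pi|=n>2$, let $\mathcal{G}$ be a rooted communication graph on $\Pi$ with $\operatorname{Root}(\mathcal{G})=R$, let $\mathcal{G}'$ be a rooted communication graph on $\Pi$ with $\operatorname{Root}(\mathcal{G}')=R'$, and let $R''\subseteq \Pi$ be nonempty with $R''\neq R$ and $R''\neq R'$. Then there is a sequence of communication graphs $\mathcal{G}=\mathcal{G}_1,\mathcal{G}_2,\dots,\mathcal{G}_k=\mathcal{G}'$ such that each $\mathcal{G}_i$ is rooted, $\operatorname{Root}(\mathcal{G}_i)\neq R''$, and for $1\le i<k$ the graphs $\mathcal{G}_i$ and $\mathcal{G}_{i+1}$ differ in exactly one edge.
   Context: A communication graph on $\Pi$ is a directed graph with vertex set $\Pi$ containing every self-loop. A root component of a graph $\mathcal{G}$ is a nonempty set $R\subseteq\Pi$ that is the vertex set of a strongly connected component of $\mathcal{G}$ such that no edge $(p\to q)$ with $q\in R$, $p\notin R$ exists. A graph is rooted if it has exactly one root component, denoted $\operatorname{Root}(\mathcal{G})$. *)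

theory Defs
  imports Main
begin

text \<open>Processes are the elements of a finite type 'p (the set \<Pi> = UNIV).
  A directed graph on \<Pi> is given by its edge set, a relation on 'p.\<close>

definition comm_graph :: "('p \<times> 'p) set \<Rightarrow> bool" where
  "comm_graph E \<longleftrightarrow> (\<forall>p. (p, p) \<in> E)"

definition is_scc :: "('p \<times> 'p) set \<Rightarrow> 'p set \<Rightarrow> bool" where
  "is_scc E C \<longleftrightarrow> C \<noteq> {} \<and> (\<forall>p\<in>C. \<forall>q. q \<in> C \<longleftrightarrow> ((p, q) \<in> E\<^sup>* \<and> (q, p) \<in> E\<^sup>*))"

definition is_root_comp :: "('p \<times> 'p) set \<Rightarrow> 'p set \<Rightarrow> bool" where
  "is_root_comp E R \<longleftrightarrow> R \<noteq> {} \<and> is_scc E R \<and> (\<forall>p q. (p, q) \<in> E \<and> q \<in> R \<longrightarrow> p \<in> R)"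

definition rooted :: "('p \<times> 'p) set \<Rightarrow> bool" where
  "rooted E \<longleftrightarrow> (\<exists>!R. is_root_comp E R)"

definition Root :: "('p \<times> 'p) set \<Rightarrow> 'p set" where
  "Root E = (THE R. is_root_comp E R)"

definition differ_one_edge :: "('p \<times> 'p) set \<Rightarrow> ('p \<times> 'p) set \<Rightarrow> bool" where
  "differ_one_edge E F \<longleftrightarrow> card ((E - F) \<union> (F - E)) = 1"

end

theory Submission
  imports Defs
begin

text \<open>Call the out-star of a nonempty set \<open>S\<close> the graph in which exactly the processes
  of \<open>S\<close> send to everybody; its root is \<open>S\<close>. Adding the edges out of \<open>Root G\<close> to \<open>G\<close> one
  at a time, and then removing the edges outside the out-star of \<open>Root G\<close> one at a time,
  never changes the root, so \<open>G\<close> is connected to that out-star. Every graph between the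
  out-stars of \<open>S\<close> and \<open>S \<union> {x}\<close> has root \<open>S\<close> or \<open>S \<union> {x}\<close>, so out-stars can be grown and
  shrunk one process at a time while avoiding \<open>R''\<close>. This connects the out-star of
  \<open>Root G\<close> to that of a singleton \<open>{a}\<close>, and two singletons \<open>{a}\<close>, \<open>{b}\<close> are connected via
  \<open>{a, b}\<close> or, if \<open>{a, b} = R''\<close>, via a third process \<open>c\<close>, which exists because \<open>n > 2\<close>.\<close>

definition edge_step :: "(('p \<times> 'p) set \<Rightarrow> bool) \<Rightarrow> ('p \<times> 'p) set \<Rightarrow> ('p \<times> 'p) set \<Rightarrow> bool" where
  "edge_step P E F \<longleftrightarrow> P E \<and> P F \<and> differ_one_edge E F"

lemma differ_one_edge_commute: "differ_one_edge E F \<longleftrightarrow> differ_one_edge F E"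
  unfolding differ_one_edge_def by (simp add: Un_commute)

lemma edge_step_rtranclp_sym:
  assumes "(edge_step P)\<^sup>*\<^sup>* E F"
  shows "(edge_step P)\<^sup>*\<^sup>* F E"
proof -
  have "symp (edge_step P)"
    by (rule sympI) (auto simp: edge_step_def differ_one_edge_commute)
  with assms show ?thesis
    by (blast dest: sympD[OF symp_rtranclp])
qed

lemma rtranclp_imp_successively:
  assumes "r\<^sup>*\<^sup>* x y"
  obtains xs where "xs \<noteq> []" "hd xs = x" "last xs = y" "successively r xs"
  using assms
proof (induction arbitrary: thesis rule: converse_rtranclp_induct)
  case base
  show ?case by (rule base.prems[of "[y]"]) auto
next
  case (step x z)
  obtain xs where "xs \<noteq> []" "hd xs = z" "last xs = y" "successively r xs"
    using step.IH by blast
  with step.hyps(1) show ?case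
    by (intro step.prems[of "x # xs"]) (auto simp: successively_Cons)
qed

lemma successively_edge_step_all:
  "successively (edge_step P) xs \<Longrightarrow> P (hd xs) \<Longrightarrow> H \<in> set xs \<Longrightarrow> P H"
  by (induction "edge_step P" xs rule: successively.induct) (auto simp: edge_step_def)

lemma edge_step_rtranclp_interval:
  fixes E F :: "('p::finite \<times> 'p) set"
  assumes "E \<subseteq> F" and "\<And>H. E \<subseteq> H \<Longrightarrow> H \<subseteq> F \<Longrightarrow> P H"
  shows "(edge_step P)\<^sup>*\<^sup>* E F"
proof -
  have "(edge_step P)\<^sup>*\<^sup>* E (E \<union> D)" if "D \<subseteq> F - E" for D
    using finite[of D] that
  proof (induction D rule: finite_subset_induct')
    case empty
    show ?case by simp
  next
    case (insert d D)
    have "(E \<union> D - (E \<union> insert d D)) \<union> (E \<union> insert d D - (E \<union> D)) = {d}"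
      using insert.hyps(2,4) by blast
    then have "differ_one_edge (E \<union> D) (E \<union> insert d D)"
      unfolding differ_one_edge_def by simp
    moreover have "P (E \<union> D)" "P (E \<union> insert d D)"
      using assms insert.hyps(2,3) by blast+
    ultimately have "edge_step P (E \<union> D) (E \<union> insert d D)"
      unfolding edge_step_def by blast
    with insert.IH show ?case by (rule rtranclp.rtrancl_into_rtrancl)
  qed
  from this[of "F - E"] show ?thesis
    using assms(1) by (simp add: Un_absorb1)
qed

lemma comm_graph_mono: "comm_graph G \<Longrightarrow> G \<subseteq> H \<Longrightarrow> comm_graph H"
  unfolding comm_graph_def by blast

lemma is_root_comp_Root: "rooted G \<Longrightarrow> is_root_comp G (Root G)"
  unfolding rooted_def Root_def by (rule theI')

lemma rtrancl_pred_closed: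
  assumes "\<And>p q. (p, q) \<in> H \<Longrightarrow> q \<in> A \<Longrightarrow> p \<in> A" and "(x, y) \<in> H\<^sup>*" and "y \<in> A"
  shows "x \<in> A"
  using assms(2,3) by (induction rule: converse_rtrancl_induct) (use assms(1) in blast)+

lemma is_scc_mutually_reachable: "is_scc E {y. (u, y) \<in> E\<^sup>* \<and> (y, u) \<in> E\<^sup>*}"
proof -
  have "q \<in> {y. (u, y) \<in> E\<^sup>* \<and> (y, u) \<in> E\<^sup>*} \<longleftrightarrow> (p, q) \<in> E\<^sup>* \<and> (q, p) \<in> E\<^sup>*"
    if "p \<in> {y. (u, y) \<in> E\<^sup>* \<and> (y, u) \<in> E\<^sup>*}" for p q
    using that by (auto intro: rtrancl_trans[of p u E q] rtrancl_trans[of q u E p]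
        rtrancl_trans[of u p E q] rtrancl_trans[of q p E u])
  then show ?thesis
    unfolding is_scc_def using rtrancl_refl by blast
qed

lemma rooted_Root_eqI:
  assumes "r \<in> R" and "\<And>x. (r, x) \<in> H\<^sup>*"
    and "\<And>p q. (p, q) \<in> H \<Longrightarrow> q \<in> R \<Longrightarrow> p \<in> R"
    and "\<And>x. x \<in> R \<Longrightarrow> (x, r) \<in> H\<^sup>*"
  shows "rooted H \<and> Root H = R"
proof -
  have R_eq: "R = {y. (r, y) \<in> H\<^sup>* \<and> (y, r) \<in> H\<^sup>*}"
  proof (intro set_eqI iffI)
    show "y \<in> {y. (r, y) \<in> H\<^sup>* \<and> (y, r) \<in> H\<^sup>*}" if "y \<in> R" for y
      using assms(2,4) that by simp
    show "y \<in> R" if "y \<in> {y. (r, y) \<in> H\<^sup>* \<and> (y, r) \<in> H\<^sup>*}" for y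
      using rtrancl_pred_closed[OF assms(3) _ assms(1)] that by simp
  qed
  have "is_scc H R"
    unfolding R_eq by (rule is_scc_mutually_reachable)
  then have root_comp: "is_root_comp H R"
    unfolding is_root_comp_def using assms(1,3) by blast
  have unique: "C = R" if "is_root_comp H C" for C
  proof -
    have "C \<noteq> {}" and "is_scc H C" and C_closed: "\<And>p q. (p, q) \<in> H \<Longrightarrow> q \<in> C \<Longrightarrow> p \<in> C"
      using that unfolding is_root_comp_def by blast+
    then obtain c where "c \<in> C" by blast
    have "r \<in> C"
      using rtrancl_pred_closed[OF C_closed assms(2) \<open>c \<in> C\<close>] .
    with \<open>is_scc H C\<close> have "\<forall>q. q \<in> C \<longleftrightarrow> (r, q) \<in> H\<^sup>* \<and> (q, r) \<in> H\<^sup>*"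
      unfolding is_scc_def by blast
    then show "C = R"
      unfolding R_eq by blast
  qed
  have "rooted H"
    unfolding rooted_def using root_comp unique by blast
  moreover have "Root H = R"
    unfolding Root_def using root_comp unique by (rule the_equality)
  ultimately show ?thesis ..
qed

text \<open>A vertex \<open>u\<close> with the fewest ancestors among the ancestors of \<open>v\<close> has no ancestor
  outside its own strongly connected component.\<close>

lemma ex_root_comp_reaching:
  fixes G :: "('p::finite \<times> 'p) set"
  shows "\<exists>C. is_root_comp G C \<and> (\<forall>u\<in>C. (u, v) \<in> G\<^sup>*)"
proof -
  define S where "S = {x. (x, v) \<in> G\<^sup>*}"
  define anc where "anc x = {y. (y, x) \<in> G\<^sup>*}" for x
  have "finite S" "S \<noteq> {}" unfolding S_def by auto
  define u where "u = arg_min_on (\<lambda>x. card (anc x)) S"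
  from arg_min_if_finite[OF \<open>finite S\<close> \<open>S \<noteq> {}\<close>, of "\<lambda>x. card (anc x)"]
  have uS: "u \<in> S" and umin: "\<And>w. w \<in> S \<Longrightarrow> card (anc u) \<le> card (anc w)"
    unfolding u_def by (auto simp: not_less)
  define C where "C = {y. (u, y) \<in> G\<^sup>* \<and> (y, u) \<in> G\<^sup>*}"
  have closed: "p \<in> C" if "(p, q) \<in> G" "q \<in> C" for p q
  proof -
    have pu: "(p, u) \<in> G\<^sup>*"
      using that unfolding C_def by (simp add: converse_rtrancl_into_rtrancl)
    then have "p \<in> S"
      using uS unfolding S_def by (simp add: rtrancl_trans[of p u G v])
    have sub: "anc p \<subseteq> anc u"
      using pu unfolding anc_def by (auto intro: rtrancl_trans[of _ p G u])
    then have "anc p = anc u"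
      using card_subset_eq[OF finite sub] card_mono[OF finite sub] umin[OF \<open>p \<in> S\<close>] by simp
    moreover have "u \<in> anc u"
      unfolding anc_def by simp
    ultimately have "u \<in> anc p"
      by simp
    then have "(u, p) \<in> G\<^sup>*"
      unfolding anc_def by simp
    with pu show ?thesis unfolding C_def by blast
  qed
  have "is_scc G C"
    unfolding C_def by (rule is_scc_mutually_reachable)
  moreover have "C \<noteq> {}"
    unfolding C_def by blast
  ultimately have "is_root_comp G C"
    using closed unfolding is_root_comp_def by blast
  moreover have "\<forall>w\<in>C. (w, v) \<in> G\<^sup>*"
    using uS unfolding C_def S_def by (auto intro: rtrancl_trans[of _ u G v])
  ultimately show ?thesis by blast
qed

lemma Root_reaches:
  fixes G :: "('p::finite \<times> 'p) set"
  assumes "rooted G" and "r \<in> Root G"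
  shows "(r, v) \<in> G\<^sup>*"
proof -
  obtain C where C: "is_root_comp G C" "\<forall>u\<in>C. (u, v) \<in> G\<^sup>*"
    using ex_root_comp_reaching by blast
  have "C = Root G"
    using assms(1) C(1) is_root_comp_Root[OF assms(1)] unfolding rooted_def by blast
  with C(2) assms(2) show ?thesis by blast
qed

definition out_star :: "'p set \<Rightarrow> ('p \<times> 'p) set" where
  "out_star S = Id \<union> S \<times> UNIV"

lemma comm_graph_out_star: "comm_graph (out_star S)"
  unfolding comm_graph_def out_star_def by blast

lemma Root_eq_if_out_star_subset:
  assumes "S \<noteq> {}" and "S \<subseteq> R" and "out_star S \<subseteq> H"
    and "\<And>p q. (p, q) \<in> H \<Longrightarrow> q \<in> R \<Longrightarrow> p \<in> R"
    and "\<And>x. x \<in> R \<Longrightarrow> \<exists>s\<in>S. (x, s) \<in> H\<^sup>*"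
  shows "rooted H \<and> Root H = R"
proof -
  obtain r where "r \<in> S" using assms(1) by blast
  have to_all: "(s, x) \<in> H" if "s \<in> S" for s x
    using that assms(3) unfolding out_star_def by blast
  show ?thesis
  proof (rule rooted_Root_eqI)
    show "r \<in> R" using \<open>r \<in> S\<close> assms(2) by blast
    show "(r, x) \<in> H\<^sup>*" for x
      using to_all[OF \<open>r \<in> S\<close>] by blast
    show "p \<in> R" if "(p, q) \<in> H" "q \<in> R" for p q
      using assms(4) that .
    show "(x, r) \<in> H\<^sup>*" if "x \<in> R" for x
      using assms(5)[OF that] to_all by (blast intro: rtrancl_into_rtrancl)
  qed
qed

definition rooted_avoiding :: "'p set \<Rightarrow> ('p \<times> 'p) set \<Rightarrow> bool" where
  "rooted_avoiding X H \<longleftrightarrow> comm_graph H \<and> rooted H \<and> Root H \<noteq> X"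

abbreviation connected_avoiding :: "'p set \<Rightarrow> ('p \<times> 'p) set \<Rightarrow> ('p \<times> 'p) set \<Rightarrow> bool" where
  "connected_avoiding X \<equiv> (edge_step (rooted_avoiding X))\<^sup>*\<^sup>*"

lemma out_star_insert:
  fixes S :: "'p::finite set"
  assumes "S \<noteq> {}" and "S \<noteq> X" and "insert x S \<noteq> X"
  shows "connected_avoiding X (out_star S) (out_star (insert x S))"
proof (rule edge_step_rtranclp_interval)
  show "out_star S \<subseteq> out_star (insert x S)"
    unfolding out_star_def by blast
next
  fix H
  assume H: "out_star S \<subseteq> H" "H \<subseteq> out_star (insert x S)"
  have "rooted H \<and> (Root H = S \<or> Root H = insert x S)"
  proof (cases "\<exists>s\<in>S. (x, s) \<in> H")
    case True
    have "rooted H \<and> Root H = insert x S"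
    proof (rule Root_eq_if_out_star_subset[OF assms(1) _ H(1)])
      show "S \<subseteq> insert x S" by blast
      show "p \<in> insert x S" if "(p, q) \<in> H" "q \<in> insert x S" for p q
        using H(2) that unfolding out_star_def by blast
      show "\<exists>s\<in>S. (y, s) \<in> H\<^sup>*" if "y \<in> insert x S" for y
        using True that by (blast intro: r_into_rtrancl rtrancl_refl)
    qed
    then show ?thesis by blast
  next
    case False
    have "rooted H \<and> Root H = S"
    proof (rule Root_eq_if_out_star_subset[OF assms(1) subset_refl H(1)])
      show "p \<in> S" if "(p, q) \<in> H" "q \<in> S" for p q
        using H(2) False that unfolding out_star_def by blast
      show "\<exists>s\<in>S. (y, s) \<in> H\<^sup>*" if "y \<in> S" for y
        using that by blast
    qed
    then show ?thesis by blast
  qed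
  then show "rooted_avoiding X H"
    using comm_graph_mono[OF comm_graph_out_star H(1)] assms(2,3)
    unfolding rooted_avoiding_def by blast
qed

lemma out_star_union:
  fixes S T :: "'p::finite set"
  assumes "S \<noteq> {}" and "\<And>U. S \<subseteq> U \<Longrightarrow> U \<subseteq> S \<union> T \<Longrightarrow> U \<noteq> X"
  shows "connected_avoiding X (out_star S) (out_star (S \<union> T))"
  using finite[of T] assms(2)
proof (induction T rule: finite_induct)
  case empty
  show ?case by simp
next
  case (insert t T)
  have "connected_avoiding X (out_star S) (out_star (S \<union> T))"
  proof (rule insert.IH)
    show "U \<noteq> X" if "S \<subseteq> U" "U \<subseteq> S \<union> T" for U
      using insert.prems that by blast
  qed
  moreover have "connected_avoiding X (out_star (S \<union> T)) (out_star (insert t (S \<union> T)))"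
    by (rule out_star_insert) (use assms(1) insert.prems in blast)+
  ultimately show ?case
    unfolding Un_insert_right by (rule rtranclp_trans)
qed

lemma connected_avoiding_out_star_Root:
  fixes G :: "('p::finite \<times> 'p) set"
  assumes "comm_graph G" and "rooted G" and "Root G \<noteq> X"
  shows "connected_avoiding X G (out_star (Root G))"
proof -
  define R where "R = Root G"
  have root_comp: "is_root_comp G R"
    unfolding R_def using assms(2) by (rule is_root_comp_Root)
  then obtain r where r: "r \<in> R"
    unfolding is_root_comp_def by blast
  have closed: "p \<in> R" if "(p, q) \<in> G" "q \<in> R" for p q
    using root_comp that unfolding is_root_comp_def by blast
  have to_r: "(x, r) \<in> G\<^sup>*" if "x \<in> R" for x
    using root_comp r that unfolding is_root_comp_def is_scc_def by blast
  have from_r: "(r, x) \<in> G\<^sup>*" for x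
    using Root_reaches[OF assms(2)] r unfolding R_def by blast
  have avoiding: "rooted_avoiding X H" if "comm_graph H" "rooted H \<and> Root H = R" for H
    using that assms(3) unfolding rooted_avoiding_def R_def by blast
  have up: "connected_avoiding X G (G \<union> R \<times> UNIV)"
  proof (rule edge_step_rtranclp_interval)
    show "G \<subseteq> G \<union> R \<times> UNIV" by blast
  next
    fix H
    assume H: "G \<subseteq> H" "H \<subseteq> G \<union> R \<times> UNIV"
    have "rooted H \<and> Root H = R"
    proof (rule rooted_Root_eqI[OF r])
      show "(r, x) \<in> H\<^sup>*" for x
        using from_r rtrancl_mono[OF H(1)] by blast
      show "p \<in> R" if "(p, q) \<in> H" "q \<in> R" for p q
        using H(2) closed that by blast
      show "(x, r) \<in> H\<^sup>*" if "x \<in> R" for x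
        using to_r[OF that] rtrancl_mono[OF H(1)] by blast
    qed
    with comm_graph_mono[OF assms(1) H(1)] show "rooted_avoiding X H"
      by (rule avoiding)
  qed
  have down: "connected_avoiding X (out_star R) (G \<union> R \<times> UNIV)"
  proof (rule edge_step_rtranclp_interval)
    show "out_star R \<subseteq> G \<union> R \<times> UNIV"
      using assms(1) unfolding out_star_def comm_graph_def by blast
  next
    fix H
    assume H: "out_star R \<subseteq> H" "H \<subseteq> G \<union> R \<times> UNIV"
    have "rooted H \<and> Root H = R"
    proof (rule Root_eq_if_out_star_subset[OF _ subset_refl H(1)])
      show "R \<noteq> {}" using r by blast
      show "p \<in> R" if "(p, q) \<in> H" "q \<in> R" for p q
        using H(2) closed that by blast
      show "\<exists>s\<in>R. (x, s) \<in> H\<^sup>*" if "x \<in> R" for x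
        using that by blast
    qed
    with comm_graph_mono[OF comm_graph_out_star H(1)] show "rooted_avoiding X H"
      by (rule avoiding)
  qed
  from rtranclp_trans[OF up edge_step_rtranclp_sym[OF down]] show ?thesis
    by (simp add: R_def)
qed

text \<open>Choosing \<open>a \<notin> X\<close>, or any \<open>a\<close> if \<open>Root G \<subset> X\<close>, makes every set between \<open>{a}\<close> and
  \<open>Root G\<close> different from \<open>X\<close>.\<close>

lemma connected_avoiding_out_star_singleton:
  fixes G :: "('p::finite \<times> 'p) set"
  assumes "comm_graph G" and "rooted G" and "Root G \<noteq> X"
  obtains a where "{a} \<noteq> X" and "connected_avoiding X G (out_star {a})"
proof -
  have "Root G \<noteq> {}"
    using is_root_comp_Root[OF assms(2)] unfolding is_root_comp_def by blast
  obtain a where a: "a \<in> Root G" and avoid: "\<And>U. a \<in> U \<Longrightarrow> U \<subseteq> Root G \<Longrightarrow> U \<noteq> X"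
  proof (cases "Root G \<subseteq> X")
    case True
    with \<open>Root G \<noteq> {}\<close> assms(3) that show ?thesis by blast
  next
    case False
    with that show ?thesis by blast
  qed
  have "connected_avoiding X (out_star {a}) (out_star ({a} \<union> Root G))"
    by (rule out_star_union) (use avoid a in blast)+
  moreover have "{a} \<union> Root G = Root G" using a by blast
  ultimately have "connected_avoiding X (out_star {a}) (out_star (Root G))"
    by simp
  with connected_avoiding_out_star_Root[OF assms] have "connected_avoiding X G (out_star {a})"
    by (blast intro: rtranclp_trans edge_step_rtranclp_sym)
  moreover have "{a} \<noteq> X" using avoid a by blast
  ultimately show ?thesis using that by blast
qed

lemma out_star_singletons_via_pair:
  fixes a b :: "'p::finite"
  assumes "{a} \<noteq> X" and "{b} \<noteq> X" and "{a, b} \<noteq> X"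
  shows "connected_avoiding X (out_star {a}) (out_star {b})"
proof -
  have "insert b {a} = {a, b}" by blast
  then have "connected_avoiding X (out_star {a}) (out_star {a, b})"
    using out_star_insert[of "{a}" X b] assms by simp
  moreover have "connected_avoiding X (out_star {a, b}) (out_star {b})"
    using edge_step_rtranclp_sym[OF out_star_insert[of "{b}" X a]] assms by simp
  ultimately show ?thesis by (rule rtranclp_trans)
qed

lemma out_star_singletons:
  fixes a b :: "'p::finite"
  assumes "card (UNIV :: 'p set) > 2" and "{a} \<noteq> X" and "{b} \<noteq> X"
  shows "connected_avoiding X (out_star {a}) (out_star {b})"
proof (cases "{a, b} = X")
  case False
  with assms(2,3) show ?thesis by (rule out_star_singletons_via_pair)
next
  case True
  have "card {a, b} \<le> 2"
    by (simp add: card_insert_le_m1)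
  have "{a, b} \<noteq> UNIV"
  proof
    assume "{a, b} = UNIV"
    with \<open>card {a, b} \<le> 2\<close> assms(1) show False by simp
  qed
  then obtain c where c: "c \<notin> {a, b}" by blast
  have "connected_avoiding X (out_star {a}) (out_star {c})"
    by (rule out_star_singletons_via_pair) (use assms(2) True c in blast)+
  moreover have "connected_avoiding X (out_star {c}) (out_star {b})"
    by (rule out_star_singletons_via_pair) (use assms(3) True c in blast)+
  ultimately show ?thesis by (rule rtranclp_trans)
qed

theorem lemma2:
  fixes G G' :: "('p::finite \<times> 'p) set" and R'' :: "'p set"
  assumes "card (UNIV :: 'p set) > 2"
    and "comm_graph G" and "rooted G"
    and "comm_graph G'" and "rooted G'"
    and "R'' \<noteq> {}" and "R'' \<noteq> Root G" and "R'' \<noteq> Root G'"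
  shows "\<exists>Gs :: ('p \<times> 'p) set list. Gs \<noteq> [] \<and> hd Gs = G \<and> last Gs = G' \<and>
     (\<forall>H \<in> set Gs. comm_graph H \<and> rooted H \<and> Root H \<noteq> R'') \<and>
     (\<forall>i. Suc i < length Gs \<longrightarrow> differ_one_edge (Gs ! i) (Gs ! Suc i))"
proof -
  obtain a where a: "{a} \<noteq> R''" "connected_avoiding R'' G (out_star {a})"
    using connected_avoiding_out_star_singleton[of G R''] assms(2,3,7) by metis
  obtain b where b: "{b} \<noteq> R''" "connected_avoiding R'' G' (out_star {b})"
    using connected_avoiding_out_star_singleton[of G' R''] assms(4,5,8) by metis
  have "connected_avoiding R'' G G'"
    using rtranclp_trans[OF rtranclp_trans[OF a(2) out_star_singletons[OF assms(1) a(1) b(1)]]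
        edge_step_rtranclp_sym[OF b(2)]] .
  then obtain Gs where Gs: "Gs \<noteq> []" "hd Gs = G" "last Gs = G'"
    and steps: "successively (edge_step (rooted_avoiding R'')) Gs"
    by (rule rtranclp_imp_successively)
  have "rooted_avoiding R'' G"
    using assms(2,3,7) unfolding rooted_avoiding_def by simp
  then have "\<forall>H \<in> set Gs. comm_graph H \<and> rooted H \<and> Root H \<noteq> R''"
    using successively_edge_step_all[OF steps] Gs(2) unfolding rooted_avoiding_def by blast
  moreover have "\<forall>i. Suc i < length Gs \<longrightarrow> differ_one_edge (Gs ! i) (Gs ! Suc i)"
    using steps unfolding successively_conv_nth edge_step_def by blast
  ultimately show ?thesis using Gs by blast
qed

end
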